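(* Let $V$ be a vector space and let $\Phi_1,\Phi_2:\mathcal{P}(V)\to[0,\infty]$ satisfy, for $i=1,2$: (1) $\Phi_i(\lambda A)=|\lambda|\Phi_i(A)$ for all $A\subseteq V$, $\lambda\in\mathbb{R}$; (2) $A\subseteq B\subseteq V$ implies $\Phi_i(A)\le\Phi_i(B)$; (3) $\Phi_i(\bigcup_{n=1}^\infty A_n)\le\sum_{n=1}^\infty\Phi_i(A_n)$ for all $A_1,A_2,\ldots\subseteq V$. If for every $n\ge1$ there is a subset $B_n\subseteq V$ with $\Phi_1(B_n)\le1$ and $\Phi_2(B_n)\ge c_n$, where $c_n\uparrow\infty$, then there exists a set $A\subseteq V$ with $\Phi_1(A)\le1$ and $\Phi_2(A)=\infty$.
   Context: $\mathcal{P}(V)$ denotes the power set of $V$; $\lambda A=\{\lambda a:a\in A\}$. *)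

theory Defs
  imports "HOL-Analysis.Analysis"
begin

definition admissible_setfun :: "('a::real_vector set \<Rightarrow> ennreal) \<Rightarrow> bool" where
  "admissible_setfun \<Phi> \<longleftrightarrow>
     (\<forall>A (l::real). \<Phi> ((\<lambda>a. l *\<^sub>R a) ` A) = ennreal \<bar>l\<bar> * \<Phi> A) \<and>
     (\<forall>A B. A \<subseteq> B \<longrightarrow> \<Phi> A \<le> \<Phi> B) \<and>
     (\<forall>An :: nat \<Rightarrow> 'a set. \<Phi> (\<Union>n. An n) \<le> (\<Sum>n. \<Phi> (An n)))"

end

theory Submission
  imports Defs
begin

(* Idea (a condensation argument).  If there are sets B_k with
   Phi1(B_k) <= 1 and Phi2(B_k) >= 4^(k+1), put A = U_k 2^-(k+1) B_k.  Subadditivity and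
   homogeneity give Phi1(A) <= sum_k 2^-(k+1) = 1, while monotonicity and homogeneity give
   Phi2(A) >= 2^-(k+1) 4^(k+1) = 2^(k+1) for every k, hence Phi2(A) = infinity. *)

lemma admissible_scale:
  assumes "admissible_setfun \<Phi>" and "0 \<le> s"
  shows "\<Phi> ((\<lambda>a. s *\<^sub>R a) ` A) = ennreal s * \<Phi> A"
  using assms unfolding admissible_setfun_def by simp

lemma admissible_mono:
  assumes "admissible_setfun \<Phi>" and "A \<subseteq> B"
  shows "\<Phi> A \<le> \<Phi> B"
  using assms unfolding admissible_setfun_def by blast

lemma admissible_subadditive:
  assumes "admissible_setfun \<Phi>"
  shows "\<Phi> (\<Union>n. A n) \<le> (\<Sum>n. \<Phi> (A n))"
  using assms unfolding admissible_setfun_def by blast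

lemma admissible_Union_scaled_le:
  assumes "admissible_setfun \<Phi>" and "\<And>k. 0 \<le> w k" and "\<And>k. \<Phi> (B k) \<le> 1"
  shows "\<Phi> (\<Union>k. (\<lambda>a. w k *\<^sub>R a) ` B k) \<le> (\<Sum>k. ennreal (w k))"
proof -
  have "\<Phi> (\<Union>k. (\<lambda>a. w k *\<^sub>R a) ` B k) \<le> (\<Sum>k. \<Phi> ((\<lambda>a. w k *\<^sub>R a) ` B k))"
    using assms(1) by (rule admissible_subadditive)
  also have "\<dots> \<le> (\<Sum>k. ennreal (w k))"
  proof (rule suminf_le)
    fix k
    have "\<Phi> ((\<lambda>a. w k *\<^sub>R a) ` B k) = ennreal (w k) * \<Phi> (B k)"
      using assms(1,2) by (rule admissible_scale)
    also have "\<dots> \<le> ennreal (w k) * 1"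
      using assms(3) by (rule mult_left_mono) simp
    finally show "\<Phi> ((\<lambda>a. w k *\<^sub>R a) ` B k) \<le> ennreal (w k)" by simp
  qed auto
  finally show ?thesis .
qed

lemma admissible_Union_scaled_ge:
  assumes "admissible_setfun \<Phi>" and "0 \<le> w k"
  shows "ennreal (w k) * \<Phi> (B k) \<le> \<Phi> (\<Union>j. (\<lambda>a. w j *\<^sub>R a) ` B j)"
proof -
  have "ennreal (w k) * \<Phi> (B k) = \<Phi> ((\<lambda>a. w k *\<^sub>R a) ` B k)"
    using assms by (simp add: admissible_scale)
  also have "\<dots> \<le> \<Phi> (\<Union>j. (\<lambda>a. w j *\<^sub>R a) ` B j)"
    using assms(1) by (rule admissible_mono) blast
  finally show ?thesis .
qed

lemma ennreal_top_if_above_powers_of_two: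
  fixes x :: ennreal
  assumes "\<And>k. ennreal (2 ^ k) \<le> x"
  shows "x = \<infinity>"
proof (rule ccontr)
  assume "x \<noteq> \<infinity>"
  then obtain r where r: "x = ennreal r" "0 \<le> r"
    by (cases x rule: ennreal_cases) auto
  obtain k where "r < 2 ^ k"
    using real_arch_pow[of 2 r] by auto
  then have "x < ennreal (2 ^ k)"
    using r by (simp add: ennreal_lessI)
  with assms[of k] show False by simp
qed

lemma admissible_condensation:
  assumes "admissible_setfun \<Phi>1" and "admissible_setfun \<Phi>2"
    and "\<And>k. \<Phi>1 (B k) \<le> 1" and "\<And>k. ennreal (4 ^ Suc k) \<le> \<Phi>2 (B k)"
  shows "\<Phi>1 (\<Union>k. (\<lambda>a. (1/2) ^ Suc k *\<^sub>R a) ` B k) \<le> 1"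
    and "\<Phi>2 (\<Union>k. (\<lambda>a. (1/2) ^ Suc k *\<^sub>R a) ` B k) = \<infinity>"
proof -
  have "(\<Sum>k. ennreal ((1/2) ^ Suc k)) = ennreal 1"
    by (rule suminf_ennreal_eq[OF zero_le_power power_half_series]) auto
  then show "\<Phi>1 (\<Union>k. (\<lambda>a. (1/2) ^ Suc k *\<^sub>R a) ` B k) \<le> 1"
    using admissible_Union_scaled_le[of \<Phi>1 "\<lambda>k. (1/2) ^ Suc k" B] assms(1,3) by simp
  have big: "ennreal (2 ^ Suc k) \<le> \<Phi>2 (\<Union>j. (\<lambda>a. (1/2) ^ Suc j *\<^sub>R a) ` B j)" for k
  proof -
    have "ennreal (2 ^ Suc k) = ennreal ((1/2) ^ Suc k) * ennreal (4 ^ Suc k)"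
      by (simp add: ennreal_mult'[symmetric] power_mult_distrib[symmetric] del: power_Suc)
    also have "\<dots> \<le> ennreal ((1/2) ^ Suc k) * \<Phi>2 (B k)"
      using assms(4) by (rule mult_left_mono) simp
    also have "\<dots> \<le> \<Phi>2 (\<Union>j. (\<lambda>a. (1/2) ^ Suc j *\<^sub>R a) ` B j)"
      using admissible_Union_scaled_ge[OF assms(2), of "\<lambda>j. (1/2) ^ Suc j"] by simp
    finally show ?thesis .
  qed
  have pow_mono: "ennreal (2 ^ k) \<le> ennreal (2 ^ Suc k)" for k
    by (intro ennreal_leI) simp
  show "\<Phi>2 (\<Union>k. (\<lambda>a. (1/2) ^ Suc k *\<^sub>R a) ` B k) = \<infinity>"
    by (rule ennreal_top_if_above_powers_of_two, rule order_trans[OF pow_mono big])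
qed

lemma filterlim_at_top_select:
  fixes c b :: "nat \<Rightarrow> real"
  assumes "filterlim c at_top sequentially"
  obtains m where "\<And>k. n0 \<le> m k" and "\<And>k. b k \<le> c (m k)"
proof -
  have "\<exists>n. n0 \<le> n \<and> b k \<le> c n" for k
  proof -
    have "\<forall>\<^sub>F n in sequentially. n0 \<le> n \<and> b k \<le> c n"
      using assms by (auto simp: filterlim_at_top intro: eventually_conj)
    then obtain N where "\<forall>n\<ge>N. n0 \<le> n \<and> b k \<le> c n"
      unfolding eventually_sequentially by blast
    then show ?thesis
      by blast
  qed
  then show ?thesis
    using that by metis
qed

theorem mainTheorem4:
  fixes \<Phi>1 \<Phi>2 :: "'a::real_vector set \<Rightarrow> ennreal"
    and c :: "nat \<Rightarrow> real" and B :: "nat \<Rightarrow> 'a set"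
  assumes "admissible_setfun \<Phi>1" and "admissible_setfun \<Phi>2"
    and "incseq c" and "filterlim c at_top sequentially"
    and "\<And>n. n \<ge> 1 \<Longrightarrow> \<Phi>1 (B n) \<le> 1 \<and> \<Phi>2 (B n) \<ge> ennreal (c n)"
  shows "\<exists>A. \<Phi>1 A \<le> 1 \<and> \<Phi>2 A = \<infinity>"
proof -
  obtain m where m_pos: "\<And>k. 1 \<le> m k" and m_large: "\<And>k. 4 ^ Suc k \<le> c (m k)"
    using filterlim_at_top_select[OF assms(4), of 1 "\<lambda>k. 4 ^ Suc k"] by blast
  have small: "\<Phi>1 (B (m k)) \<le> 1" for k
    using assms(5)[OF m_pos] by (rule conjunct1)
  have large: "ennreal (4 ^ Suc k) \<le> \<Phi>2 (B (m k))" for k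
  proof -
    have "ennreal (4 ^ Suc k) \<le> ennreal (c (m k))"
      using m_large by (rule ennreal_leI)
    also have "\<dots> \<le> \<Phi>2 (B (m k))"
      using assms(5)[OF m_pos] by (rule conjunct2)
    finally show ?thesis .
  qed
  show ?thesis
    using admissible_condensation[OF assms(1,2) small large] by (intro exI conjI)
qed

end
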